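(* Let $L\ge1$ be an integer and $g$ a real polynomial of degree at most $L$ with $g(0)=g'(0)=0$. Let $a<0<b$, $\gamma\ge 1$ and $0\le\delta\le\min\{-a/4,\,b/4\}$, and suppose $|g(x)|\le \gamma|x|+\delta$ for all $x\in[a,b]$. Then every $x\in[a,b]$ with $g(x)\ge(\gamma-1)|x|+\delta$ satisfies \[ |x|\ge \sqrt{\delta\cdot\frac{b-a}{32L^2}}\quad\text{if } \delta<\frac{b-a}{32L^2}, \qquad\text{and}\qquad |x|\ge \sqrt{\delta\cdot\frac{\sqrt{|ab|}}{16L}}\quad\text{if } \delta<\frac{\sqrt{|ab|}}{16L}. \] *)

theory Defs
  imports "HOL-Analysis.Analysis" "HOL-Computational_Algebra.Polynomial"
begin

end

theory Submission
  imports Defs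
begin

text \<open>Write \<open>g = x r\<close> with \<open>r 0 = 0\<close> and let \<open>\<rho>\<close> be either scale in the conclusion. Markov's
  inequality on \<open>[a, b]\<close>, or Bernstein's inequality, whose weight \<open>\<surd>((y - a) (b - y))\<close> is
  comparable to \<open>\<surd>|a b|\<close> near \<open>0\<close>, bounds \<open>|r'|\<close> by \<open>2 M / (7 \<rho>)\<close> on \<open>|y| \<le> 7 \<rho> / 2\<close>,
  where \<open>M = max |r|\<close>. With the growth bound on \<open>g\<close> this caps \<open>M\<close> by \<open>\<gamma> + 2/7\<close>, and then
  \<open>g x \<le> 2 M x\<^sup>2 / (7 \<rho>)\<close> is too small to exceed \<open>(\<gamma> - 1) |x| + \<delta>\<close> when \<open>x\<^sup>2 < \<delta> \<rho>\<close>.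
  Bernstein's inequality is proved by counting the zeros of \<open>cos (n t + \<beta>) - p (cos t)\<close>, which
  is \<open>e\<^sup>-\<^sup>i\<^sup>n\<^sup>t\<close> times a polynomial of degree \<open>2 n\<close> in \<open>e\<^sup>i\<^sup>t\<close>.\<close>

lemma cos_eq_cis_mean: "complex_of_real (cos x) = (cis x + cis (- x)) / 2"
  by (simp add: complex_eq_iff)

lemma cis_mult_cos: "cis x * complex_of_real (cos x) = (1 + cis x ^ 2) / 2"
  by (simp add: complex_eq_iff power2_eq_square algebra_simps cos_squared_eq)

lemma poly_eq_sum_atMost:
  fixes p :: "'a::{comm_semiring_0,semiring_1} poly"
  assumes "degree p \<le> n"
  shows "poly p x = (\<Sum>i\<le>n. coeff p i * x ^ i)"
  unfolding poly_altdef
  by (rule sum.mono_neutral_left) (use assms in \<open>auto simp: coeff_eq_0\<close>)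

text \<open>The polynomial \<open>z\<^sup>n p ((z + 1/z) / 2)\<close>; on the unit circle \<open>z = cis t\<close>
  it takes the value \<open>cis (n t) p (cos t)\<close>.\<close>

definition cos_poly_lift :: "real poly \<Rightarrow> nat \<Rightarrow> complex poly" where
  "cos_poly_lift p n =
     (\<Sum>j\<le>n. smult (of_real (coeff p j)) (monom 1 (n - j) * [:1/2, 0, 1/2:] ^ j))"

lemma poly_cos_poly_lift_cis:
  assumes "degree p \<le> n"
  shows "poly (cos_poly_lift p n) (cis t) = cis (real n * t) * of_real (poly p (cos t))"
proof -
  have "poly (cos_poly_lift p n) (cis t) =
      (\<Sum>j\<le>n. of_real (coeff p j) * (cis t ^ (n - j) * ((1 + cis t ^ 2) / 2) ^ j))"
    unfolding cos_poly_lift_def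
    by (simp add: poly_sum poly_monom algebra_simps power2_eq_square add_divide_distrib)
  also have "\<dots> = (\<Sum>j\<le>n. cis t ^ n * of_real (coeff p j * cos t ^ j))"
  proof (rule sum.cong[OF refl])
    fix j assume "j \<in> {..n}"
    then have "cis t ^ n = cis t ^ (n - j) * cis t ^ j" by (simp flip: power_add)
    then show "of_real (coeff p j) * (cis t ^ (n - j) * ((1 + cis t ^ 2) / 2) ^ j)
        = cis t ^ n * of_real (coeff p j * cos t ^ j)"
      by (simp flip: cis_mult_cos add: power_mult_distrib)
  qed
  also have "\<dots> = cis t ^ n * of_real (\<Sum>j\<le>n. coeff p j * cos t ^ j)"
    by (simp add: sum_distrib_left)
  also have "\<dots> = cis (real n * t) * of_real (poly p (cos t))"
    by (simp add: Complex.DeMoivre poly_eq_sum_atMost[OF assms])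
  finally show ?thesis .
qed

lemma degree_cos_poly_lift: "degree (cos_poly_lift p n) \<le> 2 * n"
  unfolding cos_poly_lift_def
proof (rule degree_sum_le)
  fix j assume j: "j \<in> {..n}"
  have "degree ([:1/2, 0, 1/2:] ^ j :: complex poly) \<le> 2 * j"
    using degree_power_le[of "[:1/2, 0, 1/2:] :: complex poly" j] by simp
  moreover have "degree (monom (1::complex) (n - j)) = n - j" by (simp add: degree_monom_eq)
  ultimately have "degree (monom (1::complex) (n - j) * [:1/2, 0, 1/2:] ^ j) \<le> (n - j) + 2 * j"
    using degree_mult_le[of "monom (1::complex) (n - j)" "[:1/2, 0, 1/2:] ^ j"] by linarith
  moreover have "j \<le> n" using j by simp
  ultimately show "degree (smult (of_real (coeff p j) :: complex)
      (monom 1 (n - j) * [:1/2, 0, 1/2:] ^ j)) \<le> 2 * n"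
    using degree_smult_le[of "of_real (coeff p j) :: complex"
        "monom 1 (n - j) * [:1/2, 0, 1/2:] ^ j"] by linarith
qed simp

definition cos_wave_lift :: "real \<Rightarrow> nat \<Rightarrow> complex poly" where
  "cos_wave_lift \<beta> n = [:cis (- \<beta>) / 2:] + monom (cis \<beta> / 2) (2 * n)"

lemma poly_cos_wave_lift_cis:
  "poly (cos_wave_lift \<beta> n) (cis t) = cis (real n * t) * of_real (cos (real n * t + \<beta>))"
proof -
  have "poly (cos_wave_lift \<beta> n) (cis t) = cis (- \<beta>) / 2 + cis \<beta> / 2 * cis (real (2 * n) * t)"
    using Complex.DeMoivre[of t "2 * n"] by (simp add: cos_wave_lift_def poly_monom)
  also have "\<dots> = cis (real n * t) * of_real (cos (real n * t + \<beta>))"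
    by (simp add: cos_eq_cis_mean cis_mult algebra_simps add_divide_distrib)
  finally show ?thesis .
qed

lemma degree_cos_wave_lift: "degree (cos_wave_lift \<beta> n) \<le> 2 * n"
  unfolding cos_wave_lift_def
  by (rule order.trans[OF degree_add_le]) (auto simp: degree_monom_le)

lemma inj_on_cis_period: "inj_on cis {c<..<c + 2 * pi}"
proof (rule inj_onI)
  fix u v assume uv: "u \<in> {c<..<c + 2 * pi}" "v \<in> {c<..<c + 2 * pi}" and "cis u = cis v"
  then have "cos (u - v) = 1"
    using cis_divide[of u v]
    by (metis Re_complex_of_real cis.sel(1) div_self cis_neq_zero one_complex.sel(1))
  then obtain k :: int where k: "u - v = k * 2 * pi" by (auto simp: cos_one_2pi_int)
  have "\<bar>u - v\<bar> < 2 * pi" using uv by auto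
  then have "\<bar>real_of_int k\<bar> * (2 * pi) < 1 * (2 * pi)"
    using k by (simp add: abs_mult)
  then have "k = 0" by (simp only: mult_less_cancel_right) auto
  then show "u = v" using k by simp
qed

lemma card_cos_wave_eq_poly_cos_le:
  fixes p :: "real poly"
  assumes "degree p \<le> n" and "finite Z" and "Z \<subseteq> {c<..<c + 2 * pi}"
    and "\<And>t. t \<in> Z \<Longrightarrow> cos (real n * t + \<beta>) = poly p (cos t)"
    and "cos (real n * t\<^sub>0 + \<beta>) \<noteq> poly p (cos t\<^sub>0)"
  shows "card Z \<le> 2 * n"
proof -
  define Q where "Q = cos_wave_lift \<beta> n - cos_poly_lift p n"
  have Q_cis: "poly Q (cis t) = cis (real n * t) * of_real (cos (real n * t + \<beta>) - poly p (cos t))"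
    for t
    by (simp add: Q_def poly_cos_wave_lift_cis poly_cos_poly_lift_cis[OF assms(1)] algebra_simps)
  have "Q \<noteq> 0" using Q_cis[of t\<^sub>0] assms(5) by auto
  have "card Z = card (cis ` Z)"
    using card_image[OF inj_on_subset[OF inj_on_cis_period assms(3)]] by simp
  also have "\<dots> \<le> card {z. poly Q z = 0}"
    using assms(4) Q_cis by (intro card_mono poly_roots_finite[OF \<open>Q \<noteq> 0\<close>]) auto
  also have "\<dots> \<le> degree Q" by (rule card_poly_roots_bound[OF \<open>Q \<noteq> 0\<close>])
  also have "\<dots> \<le> 2 * n"
    unfolding Q_def using degree_diff_le[OF degree_cos_wave_lift degree_cos_poly_lift] .
  finally show ?thesis .
qed

lemma sign_change_imp_zero:
  fixes f :: "real \<Rightarrow> real"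
  assumes "a < b" and "continuous_on {a..b} f" and "f a * f b < 0"
  obtains z where "a < z" "z < b" "f z = 0"
proof -
  have "f a < 0 \<and> 0 < f b \<or> f b < 0 \<and> 0 < f a"
    using assms(3) by (auto simp: mult_less_0_iff)
  then obtain z where "a \<le> z" "z \<le> b" "f z = 0"
    using IVT'[of f a 0 b] IVT2'[of f b 0 a] assms(1,2) by force
  moreover from this have "z \<noteq> a" "z \<noteq> b" using assms(3) by auto
  ultimately show ?thesis using that by force
qed

lemma sign_changes_imp_card_zeros:
  fixes f :: "real \<Rightarrow> real" and s :: "nat \<Rightarrow> real"
  assumes "continuous_on UNIV f" and "\<And>k. s k < s (Suc k)"
    and "\<And>k. f (s k) * f (s (Suc k)) < 0" and "i \<le> j"
  shows "\<exists>Z. finite Z \<and> card Z = j - i \<and> Z \<subseteq> {s i<..<s j} \<and> (\<forall>z\<in>Z. f z = 0)"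
  using \<open>i \<le> j\<close>
proof (induction j rule: dec_induct)
  case base
  show ?case by (intro exI[of _ "{}"]) simp
next
  case (step j)
  then obtain Z where Z: "finite Z" "card Z = j - i" "Z \<subseteq> {s i<..<s j}" "\<forall>z\<in>Z. f z = 0"
    by blast
  obtain z where z: "s j < z" "z < s (Suc j)" "f z = 0"
    using sign_change_imp_zero[OF assms(2) continuous_on_subset[OF assms(1)] assms(3)] by blast
  have "s i \<le> s j" using lift_Suc_mono_le[of s, OF less_imp_le[OF assms(2)] step(1)] .
  then have "z \<notin> Z" "insert z Z \<subseteq> {s i<..<s (Suc j)}" using Z(3) z(1,2) by auto
  then show ?case
    using Z z step(1) by (intro exI[of _ "insert z Z"]) auto
qed

lemma zero_after_zero_with_pos_deriv:
  fixes f :: "real \<Rightarrow> real"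
  assumes "continuous_on UNIV f" and "(f has_real_derivative D) (at a)" and "D > 0"
    and "f a = 0" and "a < b" and "f b < 0"
  obtains w where "a < w" "w < b" "f w = 0"
proof -
  obtain d where d: "d > 0" "\<And>h. h > 0 \<Longrightarrow> h < d \<Longrightarrow> f a < f (a + h)"
    using DERIV_pos_inc_right[OF assms(2,3)] by blast
  define e where "e = a + min (d / 2) ((b - a) / 2)"
  have "min (d / 2) ((b - a) / 2) \<le> (b - a) / 2" by (rule min.cobounded2)
  then have "a < e" "e < b" "f e > 0" using d assms(4,5) by (auto simp: e_def)
  moreover have "f e * f b < 0" using \<open>f e > 0\<close> assms(6) by (rule mult_pos_neg)
  ultimately obtain w where "e < w" "w < b" "f w = 0"
    using sign_change_imp_zero[of e b f] continuous_on_subset[OF assms(1)] by blast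
  then show ?thesis using \<open>a < e\<close> by (intro that) auto
qed

lemma has_real_derivative_poly_cos:
  "((\<lambda>t. poly p (cos t)) has_real_derivative (- poly (pderiv p) (cos t) * sin t)) (at t)"
  using DERIV_chain2[OF poly_DERIV DERIV_cos, of p t] by simp

lemma cos_wave_minus_poly_cos_unique_zero_in_first_gap:
  fixes p :: "real poly" and D :: "real \<Rightarrow> real" and s :: "nat \<Rightarrow> real"
  assumes D: "\<And>t. D t = cos (real n * t + \<beta>) - poly p (cos t)"
    and "n \<ge> 1" and "degree p \<le> n" and s_mono: "\<And>k. s k < s (Suc k)"
    and s_period: "s (2 * n) = s 0 + 2 * pi" and alternates: "\<And>k. D (s k) * D (s (Suc k)) < 0"
    and "\<theta> \<in> {s 0<..<s 1}" and "w \<in> {s 0<..<s 1}" and "D \<theta> = 0" and "D w = 0"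
  shows "\<theta> = w"
proof (rule ccontr)
  assume "\<theta> \<noteq> w"
  have "continuous_on UNIV D" unfolding D by (intro continuous_intros)
  then obtain Z where Z: "finite Z" "card Z = 2 * n - 1" "Z \<subseteq> {s 1<..<s (2 * n)}" "\<forall>z\<in>Z. D z = 0"
    using sign_changes_imp_card_zeros[of D s 1 "2 * n"] s_mono alternates assms(2) by auto
  let ?Z = "insert \<theta> (insert w Z)"
  have "\<theta> \<notin> insert w Z" "w \<notin> Z" using Z(3) \<open>\<theta> \<noteq> w\<close> assms(7,8) by auto
  then have "card ?Z = 2 * n + 1" using Z(1,2) assms(2) by simp
  moreover have "card ?Z \<le> 2 * n"
  proof (rule card_cos_wave_eq_poly_cos_le[OF assms(3)])
    show "finite ?Z" using Z by simp
    have "s 1 \<le> s (2 * n)" using lift_Suc_mono_le[of s, OF less_imp_le[OF s_mono]] assms(2) by simp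
    then show "?Z \<subseteq> {s 0<..<s 0 + 2 * pi}" using Z assms(7,8) s_period by auto
    show "cos (real n * t + \<beta>) = poly p (cos t)" if "t \<in> ?Z" for t
      using that Z assms(9,10) D[of t] by auto
    show "cos (real n * s 0 + \<beta>) \<noteq> poly p (cos (s 0))"
      using alternates[of 0] D[of "s 0"] by auto
  qed
  ultimately show False by simp
qed

text \<open>If \<open>T t = p (cos t)\<close> descended faster than \<open>n\<close> at \<open>\<theta>\<close>, the wave \<open>cos (n t + \<beta>)\<close> through
  \<open>(\<theta>, T \<theta>)\<close> on its descending flank is less steep there, so it meets \<open>T\<close> once more before its
  next minimum \<open>s 1\<close>.\<close>

lemma poly_pderiv_cos_mult_sin_le:
  fixes p :: "real poly"
  assumes "n \<ge> 1" and "degree p \<le> n" and bounded: "\<And>t. \<bar>poly p (cos t)\<bar> < 1"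
  shows "poly (pderiv p) (cos \<theta>) * sin \<theta> \<le> real n"
proof (rule ccontr)
  assume too_steep: "\<not> ?thesis"
  define \<alpha> where "\<alpha> = arccos (poly p (cos \<theta>))"
  have \<alpha>: "0 < \<alpha>" "\<alpha> < pi" "cos \<alpha> = poly p (cos \<theta>)"
    using arccos_lt_bounded bounded[of \<theta>] by (auto simp: \<alpha>_def abs_less_iff)
  define \<beta> where "\<beta> = \<alpha> - real n * \<theta>"
  define D where "D = (\<lambda>t. cos (real n * t + \<beta>) - poly p (cos t))"
  define s where "s = (\<lambda>k::nat. \<theta> + (real k * pi - \<alpha>) / real n)"
  have n: "real n > 0" using assms(1) by simp
  have D_s: "D (s k) = (-1) ^ k - poly p (cos (s k))" for k
  proof -
    have "real n * s k + \<beta> = real k * pi" using n by (simp add: s_def \<beta>_def field_simps)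
    then show ?thesis by (simp add: D_def)
  qed
  have D_alternates: "D (s k) * D (s (Suc k)) < 0" for k
    using bounded[of "s k"] bounded[of "s (Suc k)"]
    by (cases "even k") (auto simp: D_s abs_less_iff mult_pos_neg mult_neg_pos)
  have s_mono: "s k < s (Suc k)" for k
    using n by (simp add: s_def divide_strict_right_mono algebra_simps)
  have \<theta>_s: "s 0 < \<theta>" "\<theta> < s 1" using \<alpha> n by (simp_all add: s_def)
  have s_period: "s (2 * n) = s 0 + 2 * pi" using n by (simp add: s_def field_simps)
  have "(D has_real_derivative (- sin \<alpha> * real n + poly (pderiv p) (cos \<theta>) * sin \<theta>)) (at \<theta>)"
    using DERIV_diff[OF _ has_real_derivative_poly_cos[of p \<theta>]]
    unfolding D_def by (auto intro!: derivative_eq_intros simp: \<beta>_def)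
  moreover have "- sin \<alpha> * real n + poly (pderiv p) (cos \<theta>) * sin \<theta> > 0"
  proof -
    have "sin \<alpha> * real n \<le> 1 * real n" by (rule mult_right_mono) (use n in simp_all)
    then show ?thesis using too_steep by simp
  qed
  moreover have "D \<theta> = 0" by (simp add: D_def \<beta>_def \<alpha>)
  moreover have "D (s 1) < 0" using D_s[of 1] bounded[of "s 1"] by simp
  moreover have "continuous_on UNIV D" unfolding D_def by (intro continuous_intros)
  ultimately obtain w where w: "\<theta> < w" "w < s 1" "D w = 0"
    using zero_after_zero_with_pos_deriv \<theta>_s by metis
  then have "\<theta> = w"
    using cos_wave_minus_poly_cos_unique_zero_in_first_gap[of D n \<beta> p s \<theta> w] D_def
      assms(1,2) s_mono s_period D_alternates \<theta>_s \<open>D \<theta> = 0\<close> by simp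
  then show False using w(1) by simp
qed

lemma bernstein_inequality:
  fixes p :: "real poly"
  assumes "degree p \<le> n" and "\<forall>x\<in>{-1..1}. \<bar>poly p x\<bar> \<le> M"
  shows "\<bar>poly (pderiv p) (cos \<theta>) * sin \<theta>\<bar> \<le> real n * M"
proof (cases "n = 0")
  case True
  then have "pderiv p = 0" using assms(1) by (simp add: pderiv_eq_0_iff)
  then show ?thesis using True by simp
next
  case False
  then have n: "n \<ge> 1" "real n > 0" by simp_all
  have "M \<ge> 0" using bspec[OF assms(2), of 0] by simp
  show ?thesis
  proof (rule field_le_epsilon)
    fix e :: real assume "e > 0"
    define c where "c = M + e / real n"
    have "e / real n > 0" using \<open>e > 0\<close> n by simp
    then have "c > 0" using \<open>M \<ge> 0\<close> by (simp add: c_def)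
    define q where "q = smult (1 / c) p"
    have "\<bar>poly q (cos t)\<bar> < 1" for t
    proof -
      have "\<bar>poly p (cos t)\<bar> < c"
        using bspec[OF assms(2), of "cos t"] \<open>e / real n > 0\<close> by (simp add: c_def)
      then show ?thesis using \<open>c > 0\<close> by (simp add: q_def abs_mult)
    qed
    moreover have "degree q \<le> n" using assms(1) by (simp add: q_def)
    ultimately have "poly (pderiv q) (cos t) * sin t \<le> real n" for t
      using poly_pderiv_cos_mult_sin_le n(1) by blast
    from this[of \<theta>] this[of "- \<theta>"]
    have "\<bar>poly (pderiv p) (cos \<theta>) * sin \<theta>\<bar> / c \<le> real n"
      by (simp add: q_def pderiv_smult abs_le_iff)
    then show "\<bar>poly (pderiv p) (cos \<theta>) * sin \<theta>\<bar> \<le> real n * M + e"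
      using \<open>c > 0\<close> n by (simp add: c_def divide_le_eq algebra_simps)
  qed
qed

lemma sin_ge_7_8:
  fixes h :: real
  assumes "0 \<le> h" "h \<le> 1/2"
  shows "7/8 * h \<le> sin h"
proof -
  have "(\<Sum>m<3. sin_coeff m * h ^ m) = h"
    by (simp add: sin_coeff_def numeral_3_eq_3)
  then have "\<bar>sin h - h\<bar> \<le> inverse (fact 3) * \<bar>h\<bar> ^ 3"
    using Maclaurin_sin_bound[of h 3] by simp
  also have "inverse (fact 3) * \<bar>h\<bar> ^ 3 = h ^ 3 / 6"
  proof -
    have "fact 3 = (6::real)" by (simp add: numeral_3_eq_3)
    then show ?thesis using assms by simp
  qed
  also have "h ^ 3 / 6 \<le> h / 24"
  proof -
    have "h ^ 2 \<le> 1/4" using power_mono[OF assms(2,1), of 2] by (simp add: power_divide)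
    then have "h * h ^ 2 \<le> h * (1/4)" by (rule mult_left_mono) (use assms in simp)
    then show ?thesis by (simp add: power3_eq_cube power2_eq_square)
  qed
  finally show ?thesis by linarith
qed

lemma exists_angle_shift_with_large_sin:
  fixes \<phi> h :: real
  assumes "0 \<le> \<phi>" "\<phi> \<le> pi" "0 < h" "h \<le> 1/2"
  obtains \<psi> where "\<bar>\<phi> - \<psi>\<bar> = h" "7/8 * h \<le> sin \<psi>"
proof -
  define \<psi> where "\<psi> = (if \<phi> \<le> pi/2 then \<phi> + h else \<phi> - h)"
  have "h \<le> pi/4" using assms pi_ge_two by linarith
  then have \<psi>: "h \<le> \<psi>" "\<psi> \<le> pi - h" using assms by (auto simp: \<psi>_def)
  have "sin h \<le> sin \<psi>"
  proof (cases "\<psi> \<le> pi/2")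
    case True
    then show ?thesis using \<psi> assms by (subst sin_mono_le_eq) auto
  next
    case False
    have "sin h \<le> sin (pi - \<psi>)" using \<psi> assms False by (subst sin_mono_le_eq) auto
    then show ?thesis by simp
  qed
  moreover have "\<bar>\<phi> - \<psi>\<bar> = h" using assms by (simp add: \<psi>_def)
  ultimately show ?thesis using that sin_ge_7_8[of h] assms by force
qed

text \<open>At a point
  \<open>cos \<phi>\<close> where \<open>|p'|\<close> is maximal, shifting \<open>\<phi>\<close> by \<open>1/(2 n)\<close> loses at most half of the
  maximum by Bernstein's inequality for \<open>p'\<close>, and reaches an angle whose sine is at least
  \<open>7/(16 n)\<close>, where Bernstein's inequality for \<open>p\<close> applies.\<close>

lemma markov_inequality:
  fixes p :: "real poly"
  assumes "degree p \<le> n" and bounded: "\<forall>x\<in>{-1..1}. \<bar>poly p x\<bar> \<le> M" and "x \<in> {-1..1}"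
  shows "\<bar>poly (pderiv p) x\<bar> \<le> 32/7 * real n ^ 2 * M"
proof (cases "n = 0")
  case True
  then have "pderiv p = 0" using assms(1) by (simp add: pderiv_eq_0_iff)
  then show ?thesis using bspec[OF bounded, of 0] by simp
next
  case False
  define q where "q = pderiv p"
  have "degree q \<le> n" using assms(1) by (simp add: q_def degree_pderiv)
  have "continuous_on {-1..1::real} (\<lambda>t. \<bar>poly q t\<bar>)" by (intro continuous_intros)
  then obtain x\<^sub>0 where x\<^sub>0: "x\<^sub>0 \<in> {-1..1}" and max: "\<forall>y\<in>{-1..1}. \<bar>poly q y\<bar> \<le> \<bar>poly q x\<^sub>0\<bar>"
    using continuous_attains_sup[of "{-1..1::real}" "\<lambda>t. \<bar>poly q t\<bar>"] by auto
  define Q where "Q = \<bar>poly q x\<^sub>0\<bar>"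
  define h where "h = 1 / (2 * real n)"
  have h: "0 < h" "h \<le> 1/2" "real n * h = 1/2" using False by (auto simp: h_def field_simps)
  obtain \<psi> where \<psi>: "\<bar>arccos x\<^sub>0 - \<psi>\<bar> = h" "7/8 * h \<le> sin \<psi>"
    using exists_angle_shift_with_large_sin[of "arccos x\<^sub>0" h] x\<^sub>0 h arccos_lbound arccos_ubound
    by auto
  have "\<bar>poly q (cos (arccos x\<^sub>0)) - poly q (cos \<psi>)\<bar> \<le> real n * Q * \<bar>arccos x\<^sub>0 - \<psi>\<bar>"
    using field_differentiable_bound[of UNIV "\<lambda>t. poly q (cos t)"
        "\<lambda>t. - poly (pderiv q) (cos t) * sin t" "real n * Q" "arccos x\<^sub>0" \<psi>]
      has_real_derivative_poly_cos bernstein_inequality[OF \<open>degree q \<le> n\<close> max]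
    by (simp add: Q_def)
  also have "real n * Q * \<bar>arccos x\<^sub>0 - \<psi>\<bar> = (real n * h) * Q" using \<psi>(1) by simp
  finally have "\<bar>poly q x\<^sub>0 - poly q (cos \<psi>)\<bar> \<le> Q / 2" using x\<^sub>0 h(3) by simp
  then have half: "Q \<le> \<bar>poly q (cos \<psi>)\<bar> + Q / 2"
    unfolding Q_def using abs_triangle_ineq2[of "poly q x\<^sub>0" "poly q (cos \<psi>)"] by linarith
  have "\<bar>poly q (cos \<psi>)\<bar> * (7/8 * h) \<le> \<bar>poly q (cos \<psi>)\<bar> * sin \<psi>"
    using \<psi>(2) by (rule mult_left_mono) simp
  also have "\<dots> \<le> real n * M"
    using bernstein_inequality[OF assms(1,2), of \<psi>] \<psi>(2) h(1) by (simp add: q_def abs_mult)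
  finally have "\<bar>poly q (cos \<psi>)\<bar> \<le> 16/7 * real n ^ 2 * M"
    using h False by (simp add: h_def field_simps power2_eq_square)
  moreover have "\<bar>poly q x\<bar> \<le> Q" using max assms(3) by (simp add: Q_def)
  ultimately show ?thesis using half unfolding q_def by linarith
qed

lemma unit_interval_rescaling:
  fixes r :: "real poly"
  assumes "a < b" and "degree r \<le> n" and "\<forall>z\<in>{a..b}. \<bar>poly r z\<bar> \<le> M" and "y \<in> {a..b}"
  obtains p t where "degree p \<le> n" and "\<forall>x\<in>{-1..1}. \<bar>poly p x\<bar> \<le> M" and "t \<in> {-1..1}"
    and "poly (pderiv p) t = (b - a) / 2 * poly (pderiv r) y"
    and "(b - a) / 2 * sqrt (1 - t\<^sup>2) = sqrt ((y - a) * (b - y))"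
proof -
  define m k where "m = (a + b) / 2" and "k = (b - a) / 2"
  define p where "p = pcompose r [:m, k:]"
  define t where "t = (y - m) / k"
  have k: "k > 0" using assms(1) by (simp add: k_def)
  have "degree p \<le> n" using assms(2) k by (simp add: p_def degree_pcompose)
  moreover have "\<forall>x\<in>{-1..1}. \<bar>poly p x\<bar> \<le> M"
  proof
    fix x :: real assume "x \<in> {-1..1}"
    then have "k * x \<le> k * 1" "k * (- 1) \<le> k * x"
      using k mult_left_mono[of x 1 k] mult_left_mono[of "- 1" x k] by auto
    then have "m + k * x \<in> {a..b}" by (auto simp: m_def k_def field_simps)
    then show "\<bar>poly p x\<bar> \<le> M" using assms(3) by (simp add: p_def poly_pcompose mult.commute)
  qed
  moreover have t: "t \<in> {-1..1}" "m + k * t = y"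
    using assms(4) k by (auto simp: t_def m_def k_def field_simps)
  moreover have "poly (pderiv p) t = (b - a) / 2 * poly (pderiv r) y"
    using t(2) by (simp add: p_def pderiv_pcompose pderiv_pCons poly_pcompose k_def algebra_simps)
  moreover have "(b - a) / 2 * sqrt (1 - t\<^sup>2) = sqrt ((y - a) * (b - y))"
  proof -
    have "k + k * t = y - a" "k - k * t = b - y"
      using t(2) unfolding m_def k_def by (auto simp: field_simps)
    then have "k\<^sup>2 * (1 - t\<^sup>2) = (y - a) * (b - y)"
      by (metis (no_types) power2_eq_square square_diff_square_factored mult.right_neutral
          right_diff_distrib power_mult_distrib)
    moreover have "sqrt (k\<^sup>2 * (1 - t\<^sup>2)) = k * sqrt (1 - t\<^sup>2)"
      using k by (simp add: real_sqrt_mult)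
    ultimately show ?thesis by (simp add: k_def)
  qed
  ultimately show ?thesis using that by blast
qed

lemma markov_inequality_Icc:
  fixes r :: "real poly"
  assumes "a < b" and "degree r \<le> n" and "\<forall>z\<in>{a..b}. \<bar>poly r z\<bar> \<le> M" and "y \<in> {a..b}"
  shows "\<bar>poly (pderiv r) y\<bar> \<le> 64/7 * real n ^ 2 * M / (b - a)"
proof -
  obtain p t where "degree p \<le> n" "\<forall>x\<in>{-1..1}. \<bar>poly p x\<bar> \<le> M" "t \<in> {-1..1}"
      and p't: "poly (pderiv p) t = (b - a) / 2 * poly (pderiv r) y"
    using unit_interval_rescaling[OF assms] .
  then have "(b - a) / 2 * \<bar>poly (pderiv r) y\<bar> \<le> 32/7 * real n ^ 2 * M"
    using markov_inequality[of p n M t] assms(1) by (simp add: abs_mult)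
  then show ?thesis using assms(1) by (simp add: field_simps)
qed

lemma bernstein_inequality_Icc:
  fixes r :: "real poly"
  assumes "a < b" and "degree r \<le> n" and "\<forall>z\<in>{a..b}. \<bar>poly r z\<bar> \<le> M" and "y \<in> {a..b}"
  shows "\<bar>poly (pderiv r) y\<bar> * sqrt ((y - a) * (b - y)) \<le> real n * M"
proof -
  obtain p t where "degree p \<le> n" "\<forall>x\<in>{-1..1}. \<bar>poly p x\<bar> \<le> M" "t \<in> {-1..1}"
      and p't: "poly (pderiv p) t = (b - a) / 2 * poly (pderiv r) y"
      and sqrt_t: "(b - a) / 2 * sqrt (1 - t\<^sup>2) = sqrt ((y - a) * (b - y))"
    using unit_interval_rescaling[OF assms] .
  moreover have "sin (arccos t) = sqrt (1 - t\<^sup>2)" using \<open>t \<in> {-1..1}\<close> by (intro sin_arccos_abs) auto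
  ultimately have "\<bar>poly (pderiv p) t * sqrt (1 - t\<^sup>2)\<bar> \<le> real n * M"
    using bernstein_inequality[of p n M "arccos t"] \<open>t \<in> {-1..1}\<close> by simp
  also have "poly (pderiv p) t * sqrt (1 - t\<^sup>2) = poly (pderiv r) y * sqrt ((y - a) * (b - y))"
    by (simp flip: sqrt_t add: p't)
  finally show ?thesis using assms(4) by (simp add: abs_mult)
qed

text \<open>Markov's inequality suffices when \<open>b - a \<le> 2 L \<surd>|a b|\<close>; otherwise both endpoints are far
  from the window \<open>|y| \<le> 7 \<rho> / 2\<close>, and Bernstein's inequality applies there.\<close>

lemma poly_pderiv_bound_near_zero:
  fixes r :: "real poly"
  assumes "a < 0" and "0 < b" and "L \<ge> 1" and "degree r \<le> L"
    and bounded: "\<forall>z\<in>{a..b}. \<bar>poly r z\<bar> \<le> M" and "y \<in> {a..b}"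
    and \<rho>: "\<rho> = sqrt \<bar>a * b\<bar> / (16 * real L)" and "\<bar>y\<bar> \<le> 7/2 * \<rho>"
  shows "\<bar>poly (pderiv r) y\<bar> \<le> 2/7 * M / \<rho>"
proof -
  define s where "s = sqrt \<bar>a * b\<bar>"
  have "a * b < 0" using assms(1,2) by (rule mult_neg_pos)
  then have s: "s > 0" "s\<^sup>2 = (- a) * b" by (simp_all add: s_def)
  have L: "real L \<ge> 1" using assms(3) by simp
  have M: "M \<ge> 0" using bspec[OF bounded, of 0] assms(1,2) by simp
  have goal: "2/7 * M / \<rho> = 32/7 * real L * M / s" using s L by (simp add: \<rho> s_def field_simps)
  show ?thesis
  proof (cases "2 * real L * s \<le> b - a")
    case True
    have "\<bar>poly (pderiv r) y\<bar> \<le> 64/7 * real L ^ 2 * M / (b - a)"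
      using markov_inequality_Icc[OF _ assms(4) bounded assms(6)] assms(1,2) by simp
    also have "\<dots> \<le> 64/7 * real L ^ 2 * M / (2 * real L * s)"
      by (rule divide_left_mono) (use True s L M assms(1,2) in auto)
    also have "\<dots> = 32/7 * real L * M / s" using L by (simp add: power2_eq_square)
    finally show ?thesis using goal by simp
  next
    case False
    then have "b < 2 * real L * s" "- a < 2 * real L * s" using assms(1,2) by auto
    then have "(- a) * b < (- a) * (2 * real L * s)" "(- a) * b < (2 * real L * s) * b"
      using assms(1,2)
      by (simp_all only: mult_strict_left_mono mult_strict_right_mono neg_0_less_iff_less)
    then have "s * s < (2 * real L * (- a)) * s" "s * s < (2 * real L * b) * s"
      using s(2) by (simp_all add: power2_eq_square algebra_simps)
    then have "s < 2 * real L * (- a)" "s < 2 * real L * b"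
      by (simp_all only: mult_less_cancel_right_pos[OF s(1)])
    then have "7/32 * s / real L < 7/16 * (- a)" "7/32 * s / real L < 7/16 * b"
      using L by (simp_all add: field_simps)
    moreover have "\<bar>y\<bar> \<le> 7/32 * s / real L" using assms(8) L by (simp add: \<rho> s_def)
    ultimately have "9/16 * (- a) \<le> y - a" "9/16 * b \<le> b - y" by (simp_all add: abs_le_iff)
    then have "(9/16 * s)\<^sup>2 \<le> (y - a) * (b - y)"
      using mult_mono[of "9/16 * (- a)" "y - a" "9/16 * b" "b - y"] assms(1,2) s(2)
      by (simp add: power_mult_distrib power_divide)
    then have "9/16 * s \<le> sqrt ((y - a) * (b - y))" by (rule real_le_rsqrt)
    then have "\<bar>poly (pderiv r) y\<bar> * (9/16 * s) \<le> \<bar>poly (pderiv r) y\<bar> * sqrt ((y - a) * (b - y))"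
      by (rule mult_left_mono) simp
    also have "\<dots> \<le> real L * M"
      using bernstein_inequality_Icc[OF _ assms(4) bounded assms(6)] assms(1,2) by simp
    finally have "\<bar>poly (pderiv r) y\<bar> \<le> 16/9 * real L * M / s" using s(1) by (simp add: field_simps)
    also have "\<dots> \<le> 32/7 * real L * M / s"
      using mult_right_mono[of "16/9" "32/7" "real L * M"] L M s(1)
      by (intro divide_right_mono) (simp_all add: mult.assoc)
    finally show ?thesis using goal by simp
  qed
qed

lemma abs_poly_le_of_pderiv_bound:
  fixes r :: "real poly"
  assumes "poly r 0 = 0" and "\<And>z. z \<in> {min 0 y..max 0 y} \<Longrightarrow> \<bar>poly (pderiv r) z\<bar> \<le> C"
  shows "\<bar>poly r y\<bar> \<le> C * \<bar>y\<bar>"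
  using field_differentiable_bound[of "{min 0 y..max 0 y}" "poly r" "poly (pderiv r)" C y 0]
    assms poly_DERIV[THEN has_field_derivative_at_within]
  by auto

text \<open>For \<open>\<gamma> \<le> 2\<close> the factor \<open>2 M / 7\<close> is below \<open>1\<close> and \<open>\<delta>\<close> wins; for \<open>\<gamma> > 2\<close> the factor
  \<open>2 (\<gamma> + 2/7) / 7\<close> is below \<open>\<gamma> - 1\<close>.\<close>

lemma abs_ge_sqrt_of_exceeding_local_linear_bound:
  fixes x v M \<rho> \<delta> \<gamma> :: real
  assumes "0 < \<delta>" and "\<delta> < \<rho>" and "1 \<le> \<gamma>" and "0 \<le> M" and "M \<le> \<gamma> + 2/7"
    and local_bound: "\<bar>x\<bar> \<le> 7/2 * \<rho> \<Longrightarrow> \<bar>v\<bar> \<le> 2/7 * M / \<rho> * \<bar>x\<bar>"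
    and exceeds: "x * v \<ge> (\<gamma> - 1) * \<bar>x\<bar> + \<delta>"
  shows "sqrt (\<delta> * \<rho>) \<le> \<bar>x\<bar>"
proof (rule ccontr)
  assume close: "\<not> ?thesis"
  have \<rho>: "\<rho> > 0" using assms(1,2) by simp
  have "\<bar>x\<bar>\<^sup>2 < (sqrt (\<delta> * \<rho>))\<^sup>2" using close by (intro power_strict_mono) auto
  then have "x\<^sup>2 < \<delta> * \<rho>" using assms(1) \<rho> by simp
  also have "\<dots> < \<rho>\<^sup>2" using assms(2) \<rho> by (simp add: power2_eq_square)
  finally have "\<bar>x\<bar>\<^sup>2 < \<rho>\<^sup>2" by simp
  then have "\<bar>x\<bar> < \<rho>" using power_less_imp_less_base[of "\<bar>x\<bar>" 2 \<rho>] \<rho> by simp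
  have "x\<^sup>2 \<le> \<rho> * \<bar>x\<bar>"
    using mult_right_mono[OF less_imp_le[OF \<open>\<bar>x\<bar> < \<rho>\<close>], of "\<bar>x\<bar>"] by (simp add: power2_eq_square)
  then have u: "x\<^sup>2 / \<rho> < \<delta>" "x\<^sup>2 / \<rho> \<le> \<bar>x\<bar>" "\<bar>x\<bar> \<le> 7/2 * \<rho>"
    using \<open>x\<^sup>2 < \<delta> * \<rho>\<close> \<open>\<bar>x\<bar> < \<rho>\<close> \<rho> by (simp_all add: field_simps)
  have "x * v \<le> \<bar>x\<bar> * \<bar>v\<bar>" by (simp flip: abs_mult)
  also have "\<dots> \<le> \<bar>x\<bar> * (2/7 * M / \<rho> * \<bar>x\<bar>)"
    using local_bound[OF u(3)] by (rule mult_left_mono) simp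
  also have "\<dots> = 2/7 * M * (x\<^sup>2 / \<rho>)" by (simp add: power2_eq_square field_simps)
  also have "\<dots> < (\<gamma> - 1) * \<bar>x\<bar> + \<delta>"
  proof (cases "\<gamma> \<le> 2")
    case True
    then have "2/7 * M * (x\<^sup>2 / \<rho>) \<le> 1 * (x\<^sup>2 / \<rho>)"
      using assms(5) \<rho> by (intro mult_right_mono) auto
    moreover have "(\<gamma> - 1) * \<bar>x\<bar> \<ge> 0" using assms(3) by simp
    ultimately show ?thesis using u(1) by linarith
  next
    case False
    then have "2/7 * M * (x\<^sup>2 / \<rho>) \<le> (\<gamma> - 1) * \<bar>x\<bar>"
      using assms(4,5) u(2) \<rho> by (intro mult_mono) auto
    then show ?thesis using assms(1) by simp
  qed
  finally show False using exceeds by simp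
qed

text \<open>With \<open>M = max |r|\<close> on \<open>[a, b]\<close>, the derivative bound and \<open>r 0 = 0\<close> give
  \<open>|r y| \<le> 2 M |y| / (7 \<rho>)\<close> for \<open>|y| \<le> 7 \<rho> / 2\<close>. At a maximiser of \<open>|r|\<close> this forces
  \<open>M = 0\<close> inside that window, and outside it the growth bound gives \<open>M \<le> \<gamma> + 2/7\<close>.\<close>

lemma exceeding_point_abs_ge_sqrt:
  fixes r :: "real poly" and a b \<rho> \<delta> \<gamma> x :: real
  assumes "a < 0" and "0 < b" and "0 < \<delta>" and "\<delta> < \<rho>" and "\<gamma> \<ge> 1" and "poly r 0 = 0"
    and growth: "\<forall>y\<in>{a..b}. \<bar>y * poly r y\<bar> \<le> \<gamma> * \<bar>y\<bar> + \<delta>"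
    and "x \<in> {a..b}" and exceeds: "x * poly r x \<ge> (\<gamma> - 1) * \<bar>x\<bar> + \<delta>"
    and pderiv_bound: "\<And>M y. \<forall>z\<in>{a..b}. \<bar>poly r z\<bar> \<le> M \<Longrightarrow> y \<in> {a..b} \<Longrightarrow>
      \<bar>y\<bar> \<le> 7/2 * \<rho> \<Longrightarrow> \<bar>poly (pderiv r) y\<bar> \<le> 2/7 * M / \<rho>"
  shows "sqrt (\<delta> * \<rho>) \<le> \<bar>x\<bar>"
proof -
  have \<rho>: "\<rho> > 0" using assms(3,4) by simp
  have "continuous_on {a..b} (\<lambda>t. \<bar>poly r t\<bar>)" by (intro continuous_intros)
  then obtain y\<^sub>0 where y\<^sub>0: "y\<^sub>0 \<in> {a..b}" and max: "\<forall>z\<in>{a..b}. \<bar>poly r z\<bar> \<le> \<bar>poly r y\<^sub>0\<bar>"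
    using continuous_attains_sup[of "{a..b}" "\<lambda>t. \<bar>poly r t\<bar>"] assms(1,2) by auto
  define M where "M = \<bar>poly r y\<^sub>0\<bar>"
  have near_zero: "\<bar>poly r y\<bar> \<le> 2/7 * M / \<rho> * \<bar>y\<bar>" if "y \<in> {a..b}" "\<bar>y\<bar> \<le> 7/2 * \<rho>" for y
    using that assms(1,2) max
    by (intro abs_poly_le_of_pderiv_bound assms(6) pderiv_bound) (auto simp: M_def)
  have "M \<le> \<gamma> + 2/7"
  proof (cases "\<bar>y\<^sub>0\<bar> < 7/2 * \<rho>")
    case True
    define c where "c = 2/7 * \<bar>y\<^sub>0\<bar> / \<rho>"
    have "c < 1" using True \<rho> by (simp add: c_def field_simps)
    have "M \<le> 2/7 * M / \<rho> * \<bar>y\<^sub>0\<bar>" using near_zero[OF y\<^sub>0] True by (simp add: M_def)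
    also have "\<dots> = c * M" by (simp add: c_def)
    finally have "(1 - c) * M \<le> 0" by (simp add: algebra_simps)
    then have "M \<le> 0" using \<open>c < 1\<close> by (simp add: mult_le_0_iff)
    then show ?thesis using assms(5) by simp
  next
    case False
    then have "\<bar>y\<^sub>0\<bar> > 0" using \<rho> by simp
    have "\<bar>y\<^sub>0\<bar> * M \<le> \<gamma> * \<bar>y\<^sub>0\<bar> + \<delta>" using growth y\<^sub>0 by (simp add: M_def abs_mult)
    then have "M \<le> \<gamma> + \<delta> / \<bar>y\<^sub>0\<bar>" using \<open>\<bar>y\<^sub>0\<bar> > 0\<close> by (simp add: field_simps)
    also have "\<delta> / \<bar>y\<^sub>0\<bar> \<le> \<rho> / (7/2 * \<rho>)"
      using False assms(3,4) \<rho> by (intro frac_le) auto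
    finally show ?thesis using \<rho> by simp
  qed
  moreover have "M \<ge> 0" by (simp add: M_def)
  ultimately show ?thesis
    using abs_ge_sqrt_of_exceeding_local_linear_bound[OF assms(3,4,5) _ _ _ exceeds, of M]
      near_zero[OF assms(8)] by blast
qed

lemma double_zero_factor:
  fixes g :: "'a::idom poly"
  assumes "poly g 0 = 0" and "poly (pderiv g) 0 = 0"
  obtains r where "g = [:0, 1:] * r" and "poly r 0 = 0" and "degree r \<le> degree g"
proof -
  have "[:- 0, 1:] dvd g" using assms(1) by (simp only: poly_eq_0_iff_dvd)
  then obtain r where g: "g = [:0, 1:] * r" by auto
  moreover have "poly r 0 = 0" using assms(2) by (simp add: g pderiv_mult pderiv_pCons)
  moreover have "degree r \<le> degree g" by (cases "r = 0") (simp_all add: g degree_mult_eq)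
  ultimately show ?thesis using that by blast
qed

theorem lemma3p10:
  fixes g :: "real poly" and L :: nat and a b \<gamma> \<delta> x :: real
  assumes "L \<ge> 1"
    and "degree g \<le> L"
    and "poly g 0 = 0" and "poly (pderiv g) 0 = 0"
    and "a < 0" and "0 < b"
    and "\<gamma> \<ge> 1"
    and "0 \<le> \<delta>" and "\<delta> \<le> min (- a / 4) (b / 4)"
    and "\<forall>y\<in>{a..b}. \<bar>poly g y\<bar> \<le> \<gamma> * \<bar>y\<bar> + \<delta>"
    and "x \<in> {a..b}"
    and "poly g x \<ge> (\<gamma> - 1) * \<bar>x\<bar> + \<delta>"
  shows "(\<delta> < (b - a) / (32 * real L ^ 2) \<longrightarrow>
            \<bar>x\<bar> \<ge> sqrt (\<delta> * ((b - a) / (32 * real L ^ 2))))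
       \<and> (\<delta> < sqrt \<bar>a * b\<bar> / (16 * real L) \<longrightarrow>
            \<bar>x\<bar> \<ge> sqrt (\<delta> * (sqrt \<bar>a * b\<bar> / (16 * real L))))"
proof (cases "\<delta> = 0")
  case True
  then show ?thesis by simp
next
  case False
  then have "\<delta> > 0" using assms(8) by simp
  obtain r where g: "g = [:0, 1:] * r" and "poly r 0 = 0" and "degree r \<le> L"
    using double_zero_factor[OF assms(3,4)] assms(2) by (metis order_trans)
  have growth: "\<forall>y\<in>{a..b}. \<bar>y * poly r y\<bar> \<le> \<gamma> * \<bar>y\<bar> + \<delta>" using assms(10) by (simp add: g)
  have exceeds: "x * poly r x \<ge> (\<gamma> - 1) * \<bar>x\<bar> + \<delta>" using assms(12) by (simp add: g)
  note lower_bound = exceeding_point_abs_ge_sqrt[OF assms(5,6) \<open>\<delta> > 0\<close> _ assms(7)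
      \<open>poly r 0 = 0\<close> growth assms(11) exceeds]
  show ?thesis
  proof (intro conjI impI)
    assume "\<delta> < (b - a) / (32 * real L ^ 2)"
    then show "sqrt (\<delta> * ((b - a) / (32 * real L ^ 2))) \<le> \<bar>x\<bar>"
      using markov_inequality_Icc[OF _ \<open>degree r \<le> L\<close>] assms(5,6)
      by (intro lower_bound) (simp_all add: field_simps)
  next
    assume "\<delta> < sqrt \<bar>a * b\<bar> / (16 * real L)"
    then show "sqrt (\<delta> * (sqrt \<bar>a * b\<bar> / (16 * real L))) \<le> \<bar>x\<bar>"
      using poly_pderiv_bound_near_zero[OF assms(5,6,1) \<open>degree r \<le> L\<close>] by (intro lower_bound) blast+
  qed
qed

end
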